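(* Let $\mathbb F$ be an infinite field and $\mathcal F$ a sheaf of finite-dimensional $\mathbb F$-vector spaces on a digraph $G$ such that $\dim\mathcal F(e)\le1$ for every $e\in E_G$. Then $h_1^{\rm twist}(\mathcal F)={\rm m.e.}(\mathcal F)$.
   Context: A digraph has finite vertex and edge sets with tail/head maps $t_G,h_G$. A sheaf $\mathcal F$ on $G$: finite-dimensional vector spaces $\mathcal F(P)$, $P\in V_G\sqcup E_G$, linear maps $\mathcal F(t,e)\colon\mathcal F(e)\to\mathcal F(t_Ge)$, $\mathcal F(h,e)\colon\mathcal F(e)\to\mathcal F(h_Ge)$; $\mathcal F(V)=\bigoplus_v\mathcal F(v)$, $\mathcal F(E)=\bigoplus_e\mathcal F(e)$; $d_h,d_t\colon\mathcal F(E)\to\mathcal F(V)$ send the summand $\mathcal F(e)$ into $\mathcal F(h_Ge)$ resp. $\mathcal F(t_Ge)$ via the restriction maps, $d=d_h-d_t$, $H_1=\ker d$. Twisting: with independent indeterminates $\psi(e)$, $e\in E_G$, $\mathcal F^\psi$ is the sheaf of $\mathbb F(\psi)$-vector spaces with values $\mathcal F(P)\otimes_{\mathbb F}\mathbb F(\psi)$, head maps $\mathcal F(h,e)$, tail maps $\psi(e)\mathcal F(t,e)$; $h_1^{\rm twist}(\mathcal F)=\dim_{\mathbb F(\psi)}H_1(\mathcal F^\psi)$. For $U\subset\mathcal F(V)$, $\Gamma_{\rm ht}(U)=\bigoplus_e\{w\in\mathcal F(e):d_hw\in U,d_tw\in U\}$, ${\rm excess}(\mathcal F,U)=\dim\Gamma_{\rm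 ht}(U)-\dim U$, ${\rm m.e.}(\mathcal F)=\max_U{\rm excess}(\mathcal F,U)$. *)

theory Defs
  imports "Graph_Theory.Digraph" "HOL-Library.Poly_Mapping" "HOL-Computational_Algebra.Fraction_Field" "HOL-Library.Function_Algebras"
begin

text \<open>The stalk F(v) is 'a^(sv_dim v),
  the stalk F(e) is 'a^(se_dim e); the restriction map F(h,e) : F(e) -> F(head e) is the
  matrix with entries s_hmap e j i (row j < sv_dim (head e), column i < se_dim e),
  and likewise s_tmap for F(t,e) : F(e) -> F(tail e).\<close>

record ('a, 'v, 'e) sheaf =
  sv_dim :: "'v \<Rightarrow> nat"
  se_dim :: "'e \<Rightarrow> nat"
  s_hmap :: "'e \<Rightarrow> nat \<Rightarrow> nat \<Rightarrow> 'a"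
  s_tmap :: "'e \<Rightarrow> nat \<Rightarrow> nat \<Rightarrow> 'a"

text \<open>F(V) = direct sum of vertex stalks, as functions on coordinates (v,j).\<close>
definition FV :: "('v,'e) pre_digraph \<Rightarrow> ('a::field,'v,'e) sheaf \<Rightarrow> ('v \<times> nat \<Rightarrow> 'a) set" where
  "FV G S = {x. \<forall>v j. x (v,j) \<noteq> 0 \<longrightarrow> v \<in> verts G \<and> j < sv_dim S v}"

definition FE :: "('v,'e) pre_digraph \<Rightarrow> ('a::field,'v,'e) sheaf \<Rightarrow> ('e \<times> nat \<Rightarrow> 'a) set" where
  "FE G S = {w. \<forall>e i. w (e,i) \<noteq> 0 \<longrightarrow> e \<in> arcs G \<and> i < se_dim S e}"

definition d_h :: "('v,'e) pre_digraph \<Rightarrow> ('a::field,'v,'e) sheaf \<Rightarrow> ('e \<times> nat \<Rightarrow> 'a) \<Rightarrow> ('v \<times> nat \<Rightarrow> 'a)" where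
  "d_h G S w = (\<lambda>(v,j). if v \<in> verts G \<and> j < sv_dim S v then
      (\<Sum>e\<in>{e\<in>arcs G. head G e = v}. \<Sum>i<se_dim S e. s_hmap S e j i * w (e,i)) else 0)"

definition d_t :: "('v,'e) pre_digraph \<Rightarrow> ('a::field,'v,'e) sheaf \<Rightarrow> ('e \<times> nat \<Rightarrow> 'a) \<Rightarrow> ('v \<times> nat \<Rightarrow> 'a)" where
  "d_t G S w = (\<lambda>(v,j). if v \<in> verts G \<and> j < sv_dim S v then
      (\<Sum>e\<in>{e\<in>arcs G. tail G e = v}. \<Sum>i<se_dim S e. s_tmap S e j i * w (e,i)) else 0)"

definition d_map :: "('v,'e) pre_digraph \<Rightarrow> ('a::field,'v,'e) sheaf \<Rightarrow> ('e \<times> nat \<Rightarrow> 'a) \<Rightarrow> ('v \<times> nat \<Rightarrow> 'a)" where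
  "d_map G S w = (\<lambda>p. d_h G S w p - d_t G S w p)"

definition H1 :: "('v,'e) pre_digraph \<Rightarrow> ('a::field,'v,'e) sheaf \<Rightarrow> ('e \<times> nat \<Rightarrow> 'a) set" where
  "H1 G S = {w \<in> FE G S. d_map G S w = (\<lambda>_. 0)}"

definition fscale :: "'a::field \<Rightarrow> ('i \<Rightarrow> 'a) \<Rightarrow> ('i \<Rightarrow> 'a)" where
  "fscale c f = (\<lambda>i. c * f i)"

definition vdim :: "('i \<Rightarrow> 'a::field) set \<Rightarrow> nat" where
  "vdim X = vector_space.dim (fscale :: 'a \<Rightarrow> ('i \<Rightarrow> 'a) \<Rightarrow> ('i \<Rightarrow> 'a)) X"

definition is_subspace :: "('i \<Rightarrow> 'a::field) set \<Rightarrow> bool" where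
  "is_subspace X = module.subspace (fscale :: 'a \<Rightarrow> ('i \<Rightarrow> 'a) \<Rightarrow> ('i \<Rightarrow> 'a)) X"

text \<open>The field of rational functions F(psi) in independent indeterminates psi(e), e an edge:
  the fraction field of the polynomial ring F[psi(e) : e].\<close>
type_synonym ('a, 'e) ratfun = "((('e \<Rightarrow>\<^sub>0 nat) \<Rightarrow>\<^sub>0 'a) fract)"

definition rf_const :: "'a::field \<Rightarrow> ('a, 'e::linorder) ratfun" where
  "rf_const c = Fract (Poly_Mapping.single 0 c) 1"

definition psi :: "'e::linorder \<Rightarrow> ('a::field, 'e) ratfun" where
  "psi e = Fract (Poly_Mapping.single (Poly_Mapping.single e 1) 1) 1"

definition twist :: "('a::field,'v,'e::linorder) sheaf \<Rightarrow> (('a,'e) ratfun,'v,'e) sheaf" where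
  "twist S = \<lparr> sv_dim = sv_dim S, se_dim = se_dim S,
      s_hmap = (\<lambda>e j i. rf_const (s_hmap S e j i)),
      s_tmap = (\<lambda>e j i. psi e * rf_const (s_tmap S e j i)) \<rparr>"

definition h1_twist :: "('v,'e::linorder) pre_digraph \<Rightarrow> ('a::field,'v,'e) sheaf \<Rightarrow> nat" where
  "h1_twist G S = vdim (H1 G (twist S))"

definition edge_comp :: "'e \<Rightarrow> ('e \<times> nat \<Rightarrow> 'a::zero) \<Rightarrow> ('e \<times> nat \<Rightarrow> 'a)" where
  "edge_comp e w = (\<lambda>(e',i). if e' = e then w (e',i) else 0)"

definition Gamma_ht :: "('v,'e) pre_digraph \<Rightarrow> ('a::field,'v,'e) sheaf \<Rightarrow> ('v \<times> nat \<Rightarrow> 'a) set \<Rightarrow> ('e \<times> nat \<Rightarrow> 'a) set" where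
  "Gamma_ht G S U = {w \<in> FE G S. \<forall>e \<in> arcs G.
      d_h G S (edge_comp e w) \<in> U \<and> d_t G S (edge_comp e w) \<in> U}"

definition excess :: "('v,'e) pre_digraph \<Rightarrow> ('a::field,'v,'e) sheaf \<Rightarrow> ('v \<times> nat \<Rightarrow> 'a) set \<Rightarrow> int" where
  "excess G S U = int (vdim (Gamma_ht G S U)) - int (vdim U)"

definition max_excess :: "('v,'e) pre_digraph \<Rightarrow> ('a::field,'v,'e) sheaf \<Rightarrow> int" where
  "max_excess G S = Max {excess G S U | U. is_subspace U \<and> U \<subseteq> FV G S}"

end

theory Submission
  imports Defs
begin

(* Let E1 be the arcs whose stalk is a line, and for e in E1 let alpha(e) = F(h,e) 1 and
   beta(e) = F(t,e) 1 be the images of the generator in F(V).  The twisted coboundary sends the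
   generator of e to gamma(e) = alpha(e) - psi(e) beta(e), so by rank-nullity
   h1_twist = |E1| - r with r the rank of the family gamma.  For a subspace U of F(V), the space
   Gamma_ht(U) is spanned by the generators of the arcs with alpha(e), beta(e) in U, so
   excess(U) = |E1(U)| - dim U.
   (1) excess(U) <= h1_twist: the gamma(e) with e in E1(U) lie in the scalar extension of U.
   (2) Equality is attained: discard arcs whose gamma(e) is independent of the others; for the
   remaining set X, the substitution psi(e) := c psi(e) with c not 0 or 1 (available as the
   field is infinite) shows that alpha(e) and beta(e) lie in the span of the gamma's, and since
   extension of scalars preserves independence, U = span(alpha(X), beta(X)) has excess >= h1_twist. *)

interpretation fs: vector_space "fscale :: 'k::field \<Rightarrow> ('i \<Rightarrow> 'k) \<Rightarrow> ('i \<Rightarrow> 'k)"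
  by unfold_locales (auto simp: fscale_def fun_eq_iff algebra_simps)

lemma fscale_apply: "fscale c f x = c * f x"
  by (simp add: fscale_def)

lemma sum_fun_apply: "(sum f A) x = (\<Sum>a\<in>A. f a x)"
  by (induction A rule: infinite_finite_induct) auto

lemma subspace_scale_iff:
  assumes "fs.subspace U"
  shows "fscale c x \<in> U \<longleftrightarrow> c = 0 \<or> x \<in> U"
proof
  assume scaled: "fscale c x \<in> U"
  show "c = 0 \<or> x \<in> U"
  proof (cases "c = 0")
    case False
    have "fscale (inverse c) (fscale c x) \<in> U"
      using fs.subspace_scale[OF assms scaled] .
    moreover have "fscale (inverse c) (fscale c x) = x"
      using False by (simp add: fscale_def fun_eq_iff)
    ultimately show ?thesis by simp
  qed simp
next
  assume "c = 0 \<or> x \<in> U"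
  then show "fscale c x \<in> U"
    using assms fs.subspace_0 fs.subspace_scale by auto
qed

text \<open>Dimension of a set enlarged by one vector, for sets spanned by finitely many vectors
  (the library proves this only for finite-dimensional types).\<close>

lemma dim_insert_fin:
  assumes "A \<subseteq> fs.span F" "finite F"
  shows "fs.dim (insert x A) = (if x \<in> fs.span A then fs.dim A else Suc (fs.dim A))"
proof (cases "x \<in> fs.span A")
  case True
  then show ?thesis using fs.span_redundant fs.span_eq_dim by metis
next
  case False
  obtain B where B: "B \<subseteq> A" "fs.independent B" "A \<subseteq> fs.span B" "card B = fs.dim A"
    by (rule fs.basis_exists)
  have finB: "finite B"
    using fs.independent_span_bound[OF assms(2) B(2)] B(1) assms(1) by blast
  have "fs.span B = fs.span A"
    using B(1,3) by (metis fs.span_mono fs.span_span subset_antisym)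
  then have x_new: "x \<notin> fs.span B" using False by simp
  have "insert x A \<subseteq> fs.span (insert x B)"
    using B(3) fs.span_mono[of B "insert x B"] fs.span_base[of x "insert x B"] by blast
  then have "card (insert x B) = fs.dim (insert x A)"
    using B(1) fs.independent_insertI[OF x_new B(2)] by (intro fs.basis_card_eq_dim) auto
  moreover have "x \<notin> B" using x_new fs.span_base by blast
  ultimately show ?thesis using False finB B(4) by simp
qed

lemma dim_empty: "fs.dim ({} :: ('i \<Rightarrow> 'k::field) set) = 0"
  using fs.dim_eq_card_independent[OF fs.independent_empty] by simp

lemma dim_union_le:
  assumes "finite A" "finite B"
  shows "fs.dim (A \<union> B) \<le> fs.dim A + card B"
proof -
  obtain BA where BA: "BA \<subseteq> A" "fs.independent BA" "A \<subseteq> fs.span BA" "card BA = fs.dim A"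
    by (rule fs.basis_exists)
  have "A \<union> B \<subseteq> fs.span (BA \<union> B)"
    using BA(3) fs.span_mono[of BA "BA \<union> B"] fs.span_superset[of "BA \<union> B"] by blast
  then have "fs.dim (A \<union> B) \<le> card (BA \<union> B)"
    using BA(1) assms finite_subset by (intro fs.dim_le_card) auto
  also have "\<dots> \<le> card BA + card B" by (rule card_Un_le)
  finally show ?thesis using BA(4) by simp
qed

text \<open>A vector in the span of a finite family is a linear combination
  indexed by the family itself (the library version indexes by the image).\<close>

lemma span_image_sum:
  fixes \<gamma> :: "'e \<Rightarrow> ('i \<Rightarrow> 'k::field)"
  assumes "finite D" "x \<in> fs.span (\<gamma> ` D)"
  shows "\<exists>c. x = (\<Sum>f\<in>D. fscale (c f) (\<gamma> f))"
  using assms(2)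
proof (induction rule: fs.span_induct_alt)
  case base
  show ?case by (intro exI[of _ "\<lambda>_. 0"]) (simp add: fun_eq_iff sum_fun_apply fscale_apply)
next
  case (step a y x)
  then obtain g c where g: "g \<in> D" "y = \<gamma> g" and c: "x = (\<Sum>f\<in>D. fscale (c f) (\<gamma> f))" by blast
  have combination: "fscale a y + x = (\<Sum>f\<in>D. fscale ((if f = g then a else 0) + c f) (\<gamma> f))"
    using g assms(1)
    by (simp add: c fun_eq_iff sum_fun_apply fscale_apply distrib_right sum.distrib
        if_distrib[where f="\<lambda>c. c * _"] cong: if_cong)
  show ?case by (rule exI[of _ "\<lambda>f. (if f = g then a else 0) + c f"]) (use combination in simp)
qed

definition supported :: "'i set \<Rightarrow> ('i \<Rightarrow> 'k::field) set" where
  "supported P = {x. \<forall>q. x q \<noteq> 0 \<longrightarrow> q \<in> P}"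

definition unit_vec :: "'i \<Rightarrow> ('i \<Rightarrow> 'k::field)" where
  "unit_vec p = (\<lambda>q. if q = p then 1 else 0)"

lemma subspace_supported: "fs.subspace (supported P)"
  unfolding fs.subspace_def supported_def by (auto simp: fscale_apply, metis add.right_neutral)

lemma supported_span:
  assumes "finite P"
  shows "supported P \<subseteq> fs.span (unit_vec ` P)"
proof
  fix x assume x: "x \<in> supported P"
  have "x = (\<Sum>p\<in>P. fscale (x p) (unit_vec p))"
    using x assms by (auto simp: fun_eq_iff fscale_apply sum_fun_apply unit_vec_def supported_def
        if_distrib cong: if_cong)
  also have "\<dots> \<in> fs.span (unit_vec ` P)"
    by (intro fs.span_sum fs.span_scale fs.span_base) auto
  finally show "x \<in> fs.span (unit_vec ` P)" .
qed

lemma span_coord_vanish: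
  fixes x :: "'i \<Rightarrow> 'k::field"
  assumes "x \<in> fs.span A" "\<And>y. y \<in> A \<Longrightarrow> y p = 0"
  shows "x p = 0"
proof -
  have "fs.subspace {y :: 'i \<Rightarrow> 'k. y p = 0}"
    by (auto simp: fscale_apply fs.subspace_def)
  from fs.span_subspace_induct[OF assms(1) this] assms(2) show ?thesis by auto
qed

lemma unit_vec_indep: "fs.independent (unit_vec ` P :: ('i \<Rightarrow> 'k::field) set)"
proof
  assume "fs.dependent (unit_vec ` P :: ('i \<Rightarrow> 'k) set)"
  then obtain p where p: "p \<in> P" "unit_vec p \<in> fs.span (unit_vec ` P - {unit_vec p :: 'i \<Rightarrow> 'k})"
    unfolding fs.dependent_def by auto
  have "(unit_vec p :: 'i \<Rightarrow> 'k) p = 0"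
    by (rule span_coord_vanish[OF p(2)]) (auto simp: unit_vec_def)
  then show False by (simp add: unit_vec_def)
qed

lemma dim_supported:
  assumes "finite P"
  shows "fs.dim (supported P :: ('i \<Rightarrow> 'k::field) set) = card P"
proof -
  have "unit_vec ` P \<subseteq> (supported P :: ('i \<Rightarrow> 'k) set)"
    by (auto simp: unit_vec_def supported_def split: if_splits)
  then have "card (unit_vec ` P :: ('i \<Rightarrow> 'k) set) = fs.dim (supported P :: ('i \<Rightarrow> 'k) set)"
    using supported_span[OF assms] unit_vec_indep[of P] by (intro fs.basis_card_eq_dim)
  moreover have "inj_on (unit_vec :: 'i \<Rightarrow> ('i \<Rightarrow> 'k)) P"
    by (auto simp: inj_on_def unit_vec_def fun_eq_iff)
  ultimately show ?thesis by (simp add: card_image)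
qed

section \<open>Linear relations of a finite family and rank--nullity\<close>

text \<open>This is the kernel
  of the map sending the generator of e to \<gamma>(e), the shape of H1 when arc stalks are lines.\<close>

definition relations :: "('e \<Rightarrow> ('i \<Rightarrow> 'k::field)) \<Rightarrow> 'e set \<Rightarrow> ('e \<times> nat \<Rightarrow> 'k) set" where
  "relations \<gamma> D = {w. (\<forall>e i. w (e, i) \<noteq> 0 \<longrightarrow> e \<in> D \<and> i = 0) \<and>
                       (\<Sum>e\<in>D. fscale (w (e, 0)) (\<gamma> e)) = 0}"

lemma relations_span:
  assumes "finite D"
  shows "relations \<gamma> D \<subseteq> fs.span (unit_vec ` (D \<times> {0}))"
proof -
  have "relations \<gamma> D \<subseteq> supported (D \<times> {0})" by (auto simp: relations_def supported_def)
  then show ?thesis using supported_span[of "D \<times> {0}"] assms by auto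
qed

lemma relations_mono:
  assumes "e \<notin> D" "finite D"
  shows "relations \<gamma> D \<subseteq> relations \<gamma> (insert e D)"
proof
  fix w assume w: "w \<in> relations \<gamma> D"
  then have "w (e, 0) = 0" using assms(1) by (auto simp: relations_def)
  then show "w \<in> relations \<gamma> (insert e D)"
    using w assms by (auto simp: relations_def fun_eq_iff)
qed

lemma dim_relations_empty: "fs.dim (relations \<gamma> {}) = 0"
proof -
  have "relations \<gamma> {} = fs.span {}"
    by (auto simp: relations_def fs.span_empty fun_eq_iff)
  then show ?thesis using fs.dim_span dim_empty by metis
qed

lemma relations_insert_independent:
  fixes \<gamma> :: "'e \<Rightarrow> ('i \<Rightarrow> 'k::field)"
  assumes "finite D" "e \<notin> D" "\<gamma> e \<notin> fs.span (\<gamma> ` D)"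
  shows "relations \<gamma> (insert e D) = relations \<gamma> D"
proof (rule subset_antisym)
  show "relations \<gamma> (insert e D) \<subseteq> relations \<gamma> D"
  proof
    fix w assume w: "w \<in> relations \<gamma> (insert e D)"
    have sum: "fscale (w (e, 0)) (\<gamma> e) + (\<Sum>f\<in>D. fscale (w (f, 0)) (\<gamma> f)) = 0"
      using w assms(1,2) by (simp add: relations_def)
    have "w (e, 0) = 0"
    proof (rule ccontr)
      assume "w (e, 0) \<noteq> 0"
      have "fscale (w (e, 0)) (\<gamma> e) = - (\<Sum>f\<in>D. fscale (w (f, 0)) (\<gamma> f))"
        using sum by (simp add: eq_neg_iff_add_eq_0)
      also have "\<dots> \<in> fs.span (\<gamma> ` D)"
        by (intro fs.span_neg fs.span_sum fs.span_scale fs.span_base) auto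
      finally show False
        using \<open>w (e, 0) \<noteq> 0\<close> assms(3) subspace_scale_iff[OF fs.subspace_span] by blast
    qed
    then show "w \<in> relations \<gamma> D" using w sum by (auto simp: relations_def fun_eq_iff)
  qed
  show "relations \<gamma> D \<subseteq> relations \<gamma> (insert e D)" by (rule relations_mono[OF assms(2,1)])
qed

lemma relations_insert_span:
  fixes \<gamma> :: "'e \<Rightarrow> ('i \<Rightarrow> 'k::field)"
  assumes "finite D" "e \<notin> D" and z0: "z0 \<in> relations \<gamma> (insert e D)" "z0 (e, 0) = 1"
  shows "fs.span (relations \<gamma> (insert e D)) = fs.span (insert z0 (relations \<gamma> D))"
proof (rule subset_antisym)
  show "fs.span (relations \<gamma> (insert e D)) \<subseteq> fs.span (insert z0 (relations \<gamma> D))"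
  proof (rule fs.span_minimal[OF _ fs.subspace_span], rule subsetI)
    fix w assume w: "w \<in> relations \<gamma> (insert e D)"
    define w' where "w' = w - fscale (w (e, 0)) z0"
    have "(\<Sum>f\<in>insert e D. fscale (w' (f, 0)) (\<gamma> f)) =
          (\<Sum>f\<in>insert e D. fscale (w (f, 0)) (\<gamma> f))
            - fscale (w (e, 0)) (\<Sum>f\<in>insert e D. fscale (z0 (f, 0)) (\<gamma> f))"
      by (simp add: w'_def fun_eq_iff sum_fun_apply algebra_simps sum_subtractf sum_distrib_left
          fscale_apply)
    also have "\<dots> = 0" using w z0(1) by (simp add: relations_def)
    finally have "(\<Sum>f\<in>insert e D. fscale (w' (f, 0)) (\<gamma> f)) = 0" .
    moreover have "w' (e, 0) = 0" by (simp add: w'_def z0(2) fscale_apply)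
    ultimately have "(\<Sum>f\<in>D. fscale (w' (f, 0)) (\<gamma> f)) = 0"
      using assms(1,2) by (simp add: fun_eq_iff)
    moreover have "f \<in> D \<and> i = 0" if nz: "w' (f, i) \<noteq> 0" for f i
    proof -
      have "w (f, i) \<noteq> 0 \<or> z0 (f, i) \<noteq> 0" using nz by (auto simp: w'_def fscale_apply)
      then have "(f = e \<or> f \<in> D) \<and> i = 0" using w z0(1) by (auto simp: relations_def)
      with nz \<open>w' (e, 0) = 0\<close> show ?thesis by auto
    qed
    ultimately have "w' \<in> relations \<gamma> D" by (auto simp: relations_def)
    have "w = w' + fscale (w (e, 0)) z0" by (simp add: w'_def)
    also have "\<dots> \<in> fs.span (insert z0 (relations \<gamma> D))"
      using \<open>w' \<in> relations \<gamma> D\<close> by (intro fs.span_add fs.span_scale fs.span_base) auto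
    finally show "w \<in> fs.span (insert z0 (relations \<gamma> D))" .
  qed
  show "fs.span (insert z0 (relations \<gamma> D)) \<subseteq> fs.span (relations \<gamma> (insert e D))"
    using z0(1) relations_mono[OF assms(2,1)] by (intro fs.span_mono) auto
qed

lemma relations_insert_dependent:
  fixes \<gamma> :: "'e \<Rightarrow> ('i \<Rightarrow> 'k::field)"
  assumes "finite D" "e \<notin> D" "\<gamma> e \<in> fs.span (\<gamma> ` D)"
  shows "fs.dim (relations \<gamma> (insert e D)) = Suc (fs.dim (relations \<gamma> D))"
proof -
  obtain c where c: "\<gamma> e = (\<Sum>f\<in>D. fscale (c f) (\<gamma> f))"
    using span_image_sum[OF assms(1,3)] by blast
  define z0 :: "'e \<times> nat \<Rightarrow> 'k" where
    "z0 = (\<lambda>(f, i). if i = 0 then (if f = e then 1 else if f \<in> D then - c f else 0) else 0)"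
  have z0e: "z0 (e, 0) = 1" by (simp add: z0_def)
  have z0D: "f \<in> D \<Longrightarrow> z0 (f, 0) = - c f" for f using assms(2) by (auto simp: z0_def)
  have "(\<Sum>f\<in>insert e D. fscale (z0 (f, 0)) (\<gamma> f)) = \<gamma> e + (\<Sum>f\<in>D. fscale (- c f) (\<gamma> f))"
    using assms(1,2) by (simp add: z0e z0D fscale_def fun_eq_iff)
  also have "\<dots> = 0" by (simp add: c fun_eq_iff sum_fun_apply sum_negf fscale_apply)
  finally have z0_rel: "z0 \<in> relations \<gamma> (insert e D)"
    by (auto simp: relations_def z0_def split: if_splits)
  have "z0 \<notin> fs.span (relations \<gamma> D)"
  proof
    assume "z0 \<in> fs.span (relations \<gamma> D)"
    then have "z0 (e, 0) = 0"
      by (rule span_coord_vanish) (use assms(2) in \<open>auto simp: relations_def\<close>)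
    then show False by (simp add: z0e)
  qed
  then have "fs.dim (insert z0 (relations \<gamma> D)) = Suc (fs.dim (relations \<gamma> D))"
    using dim_insert_fin[OF relations_span[OF assms(1), of \<gamma>], of z0] assms(1) by simp
  then show ?thesis
    using relations_insert_span[OF assms(1,2) z0_rel z0e] fs.span_eq_dim by metis
qed

lemma relations_rank_nullity:
  fixes \<gamma> :: "'e \<Rightarrow> ('i \<Rightarrow> 'k::field)"
  assumes "finite D"
  shows "fs.dim (relations \<gamma> D) + fs.dim (\<gamma> ` D) = card D"
  using assms
proof (induction D rule: finite_induct)
  case empty
  then show ?case by (simp add: dim_relations_empty dim_empty)
next
  case (insert e D)
  have dim_image: "fs.dim (\<gamma> ` insert e D) =
      (if \<gamma> e \<in> fs.span (\<gamma> ` D) then fs.dim (\<gamma> ` D) else Suc (fs.dim (\<gamma> ` D)))"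
    using dim_insert_fin[OF fs.span_superset, of "\<gamma> ` D" "\<gamma> e"] insert(1) by simp
  show ?case
  proof (cases "\<gamma> e \<in> fs.span (\<gamma> ` D)")
    case True
    then show ?thesis
      using insert relations_insert_dependent[OF insert(1,2) True] dim_image by simp
  next
    case False
    then show ?thesis
      using insert relations_insert_independent[OF insert(1,2) False] dim_image by simp
  qed
qed

section \<open>Extension of scalars to the rational function field\<close>

lemma rf_const_add: "rf_const (x + y) = rf_const x + rf_const y"
  by (simp add: rf_const_def single_add)

lemma rf_const_mult: "rf_const (x * y) = rf_const x * rf_const y"
  by (simp add: rf_const_def mult_single)

lemma rf_const_0: "rf_const 0 = 0"
  by (simp add: rf_const_def Zero_fract_def)

lemma rf_const_1: "rf_const 1 = 1"
  by (simp add: rf_const_def One_fract_def one_poly_mapping_def)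

lemma rf_const_inj: "(rf_const x :: ('a::field, 'e::linorder) ratfun) = rf_const y \<longleftrightarrow> x = y"
proof
  assume "(rf_const x :: ('a, 'e) ratfun) = rf_const y"
  then have "(Poly_Mapping.single 0 x :: ('e \<Rightarrow>\<^sub>0 nat) \<Rightarrow>\<^sub>0 'a) = Poly_Mapping.single 0 y"
    by (simp add: rf_const_def eq_fract)
  then show "x = y" by (metis lookup_single_eq)
qed simp

lemma psi_nonzero: "psi e \<noteq> 0"
  by (simp add: psi_def Zero_fract_def eq_fract) (metis lookup_single_eq lookup_zero one_neq_zero)

definition to_rf :: "('i \<Rightarrow> 'a::field) \<Rightarrow> ('i \<Rightarrow> ('a, 'e::linorder) ratfun)" where
  "to_rf x = (\<lambda>p. rf_const (x p))"

lemma to_rf_inj: "to_rf x = to_rf y \<longleftrightarrow> x = y"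
  by (simp add: to_rf_def fun_eq_iff rf_const_inj)

text \<open>The embedding is semilinear, so it maps spans into spans.\<close>

lemma to_rf_span:
  assumes "x \<in> fs.span A"
  shows "(to_rf x :: 'i \<Rightarrow> ('a::field, 'e::linorder) ratfun) \<in> fs.span (to_rf ` A)"
proof -
  have hom: "to_rf (x + y) = to_rf x + to_rf y" "to_rf 0 = 0"
      "to_rf (fscale c x) = fscale (rf_const c) (to_rf x)" for x y :: "'i \<Rightarrow> 'a" and c
    by (simp_all add: to_rf_def fun_eq_iff rf_const_add rf_const_0 rf_const_mult fscale_def)
  have "fs.subspace {x. (to_rf x :: 'i \<Rightarrow> ('a, 'e) ratfun) \<in> fs.span (to_rf ` A)}"
    unfolding fs.subspace_def by (auto simp: hom intro: fs.span_add fs.span_scale fs.span_zero)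
  from fs.span_subspace_induct[OF assms this] show ?thesis
    by (auto intro: fs.span_base)
qed

lemma common_denominator:
  fixes lam :: "'b \<Rightarrow> 'r::idom fract"
  assumes "finite B"
  obtains Q P where "Q \<noteq> 0" "\<And>b. b \<in> B \<Longrightarrow> Fract Q 1 * lam b = Fract (P b) 1"
proof -
  have "\<forall>b. \<exists>n d. d \<noteq> 0 \<and> lam b = Fract n d"
  proof
    fix b show "\<exists>n d. d \<noteq> 0 \<and> lam b = Fract n d" by (cases "lam b") auto
  qed
  then obtain n d where nd: "\<And>b. d b \<noteq> 0" "\<And>b. lam b = Fract (n b) (d b)" by metis
  define Q where "Q = (\<Prod>b\<in>B. d b)"
  show ?thesis
  proof (rule that)
    show "Q \<noteq> 0" using nd(1) assms by (simp add: Q_def)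
    fix b assume "b \<in> B"
    then have "Q = d b * (\<Prod>b'\<in>B-{b}. d b')" using assms by (simp add: Q_def prod.remove)
    then show "Fract Q 1 * lam b = Fract (n b * (\<Prod>b'\<in>B-{b}. d b')) 1"
      using nd by (simp add: eq_fract mult_ac)
  qed
qed

lemma Fract_sum: "(\<Sum>b\<in>B. Fract (f b) 1) = Fract (sum f B) (1::'r::idom)"
  by (induction B rule: infinite_finite_induct) (simp_all add: Zero_fract_def)

lemma lookup_mult_const:
  fixes P :: "('e \<Rightarrow>\<^sub>0 nat) \<Rightarrow>\<^sub>0 'a::field"
  shows "Poly_Mapping.lookup (P * Poly_Mapping.single 0 c) m = Poly_Mapping.lookup P m * c"
proof -
  have "P * Poly_Mapping.single 0 c = Poly_Mapping.map ((*) c) P"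
    by (simp add: mult_map_scale_conv_mult mult.commute)
  then show ?thesis by (simp add: Poly_Mapping.map.rep_eq when_def mult.commute)
qed

text \<open>A polynomial combination of independent \<open>'a\<close>-vectors vanishes only trivially:
  compare coefficients monomial by monomial.\<close>

lemma polynomial_combination_zero:
  fixes B :: "('i \<Rightarrow> 'a::field) set" and P :: "('i \<Rightarrow> 'a) \<Rightarrow> ('e \<Rightarrow>\<^sub>0 nat) \<Rightarrow>\<^sub>0 'a"
  assumes "finite B" "fs.independent B"
    and zero: "\<And>p. (\<Sum>b\<in>B. P b * Poly_Mapping.single 0 (b p)) = 0"
    and "b0 \<in> B"
  shows "P b0 = 0"
proof (rule poly_mapping_eqI)
  fix m
  have combination: "(\<Sum>b\<in>B. fscale (Poly_Mapping.lookup (P b) m) b) = 0"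
  proof
    fix p
    have "(\<Sum>b\<in>B. fscale (Poly_Mapping.lookup (P b) m) b) p
        = Poly_Mapping.lookup (\<Sum>b\<in>B. P b * Poly_Mapping.single 0 (b p)) m"
      by (simp add: sum_fun_apply fscale_def lookup_sum lookup_mult_const)
    then show "(\<Sum>b\<in>B. fscale (Poly_Mapping.lookup (P b) m) b) p = 0 p" by (simp add: zero)
  qed
  have "\<forall>u. (\<Sum>v\<in>B. fscale (u v) v) = 0 \<longrightarrow> (\<forall>v\<in>B. u v = 0)"
    using assms(1,2) unfolding fs.independent_explicit_finite_subsets by blast
  from this[rule_format, OF combination assms(4)]
  show "Poly_Mapping.lookup (P b0) m = Poly_Mapping.lookup 0 m" by simp
qed

lemma to_rf_indep:
  fixes B :: "('i \<Rightarrow> 'a::field) set"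
  assumes "finite B" "fs.independent B"
  shows "fs.independent (to_rf ` B :: ('i \<Rightarrow> ('a, 'e::linorder) ratfun) set)"
proof
  assume "fs.dependent (to_rf ` B :: ('i \<Rightarrow> ('a, 'e) ratfun) set)"
  then obtain u :: "('i \<Rightarrow> ('a, 'e) ratfun) \<Rightarrow> ('a, 'e) ratfun"
    where u: "\<exists>v\<in>to_rf ` B. u v \<noteq> 0" "(\<Sum>v\<in>to_rf ` B. fscale (u v) v) = 0"
    using fs.dependent_finite assms(1) by blast
  define lam where "lam b = u (to_rf b)" for b
  have "inj_on (to_rf :: ('i \<Rightarrow> 'a) \<Rightarrow> ('i \<Rightarrow> ('a, 'e) ratfun)) B"
    by (auto simp: inj_on_def to_rf_inj)
  then have combination: "(\<Sum>b\<in>B. fscale (lam b) (to_rf b :: 'i \<Rightarrow> ('a, 'e) ratfun)) = 0"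
    using u(2) by (simp add: lam_def sum.reindex)
  obtain b0 where b0: "b0 \<in> B" "lam b0 \<noteq> 0" using u(1) by (auto simp: lam_def)
  obtain Q P where QP: "Q \<noteq> 0" "\<And>b. b \<in> B \<Longrightarrow> Fract Q 1 * lam b = Fract (P b) 1"
    using common_denominator[OF assms(1)] by blast
  have "(\<Sum>b\<in>B. P b * Poly_Mapping.single 0 (b p)) = 0" for p
  proof -
    have "(\<Sum>b\<in>B. lam b * rf_const (b p)) = (0 :: ('a, 'e) ratfun)"
      using fun_cong[OF combination, of p] by (simp add: sum_fun_apply fscale_def to_rf_def)
    then have "Fract Q 1 * (\<Sum>b\<in>B. lam b * rf_const (b p)) = (0 :: ('a, 'e) ratfun)"
      by simp
    then have "(\<Sum>b\<in>B. Fract (P b) 1 * rf_const (b p)) = (0 :: ('a, 'e) ratfun)"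
      by (simp add: sum_distrib_left mult.assoc[symmetric] QP(2) cong: sum.cong)
    then show ?thesis by (simp add: rf_const_def Fract_sum Zero_fract_def eq_fract)
  qed
  then have "P b0 = 0" by (rule polynomial_combination_zero[OF assms _ b0(1)])
  then have "Fract Q 1 * lam b0 = 0" using QP(2)[OF b0(1)] by (simp add: Zero_fract_def)
  moreover have "Fract Q 1 \<noteq> (0 :: ('a, 'e) ratfun)" using QP(1) by (simp add: Zero_fract_def eq_fract)
  ultimately show False using b0(2) by simp
qed

lemma dim_le_extension:
  fixes A :: "('i \<Rightarrow> 'a::field) set" and W :: "('i \<Rightarrow> ('a, 'e::linorder) ratfun) set"
  assumes "finite A" "finite W" "to_rf ` A \<subseteq> fs.span W"
  shows "fs.dim A \<le> fs.dim W"
proof -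
  obtain B where B: "B \<subseteq> A" "fs.independent B" "A \<subseteq> fs.span B" "card B = fs.dim A"
    by (rule fs.basis_exists)
  obtain BW where BW: "BW \<subseteq> W" "fs.independent BW" "W \<subseteq> fs.span BW" "card BW = fs.dim W"
    by (rule fs.basis_exists)
  have finB: "finite B" using B(1) assms(1) finite_subset by blast
  have "fs.span W \<subseteq> fs.span BW"
    using BW(3) by (metis fs.span_mono fs.span_span)
  then have sub: "(to_rf ` B :: ('i \<Rightarrow> ('a, 'e) ratfun) set) \<subseteq> fs.span BW"
    using assms(3) B(1) by blast
  have "finite BW" using BW(1) assms(2) finite_subset by blast
  then have "card (to_rf ` B :: ('i \<Rightarrow> ('a, 'e) ratfun) set) \<le> card BW"
    using fs.independent_span_bound[OF _ to_rf_indep[OF finB B(2)] sub] by blast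
  moreover have "card (to_rf ` B :: ('i \<Rightarrow> ('a, 'e) ratfun) set) = card B"
    by (rule card_image) (auto simp: inj_on_def to_rf_inj)
  ultimately show ?thesis using B(4) BW(4) by simp
qed

section \<open>The dilation \<open>\<psi>(e) \<mapsto> c \<psi>(e)\<close>\<close>

text \<open>For a non-zero scalar c, rescaling one indeterminate is a field automorphism of the
  rational function field fixing the constants and the other indeterminates.\<close>

definition poly_dilate :: "'a::field \<Rightarrow> 'e \<Rightarrow> (('e \<Rightarrow>\<^sub>0 nat) \<Rightarrow>\<^sub>0 'a) \<Rightarrow> (('e \<Rightarrow>\<^sub>0 nat) \<Rightarrow>\<^sub>0 'a)" where
  "poly_dilate c e p = Abs_poly_mapping (\<lambda>m. c ^ Poly_Mapping.lookup m e * Poly_Mapping.lookup p m)"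

lemma lookup_poly_dilate:
  "Poly_Mapping.lookup (poly_dilate c e p) m = c ^ Poly_Mapping.lookup m e * Poly_Mapping.lookup p m"
proof -
  have "finite {m. c ^ Poly_Mapping.lookup m e * Poly_Mapping.lookup p m \<noteq> 0}"
    by (rule finite_subset[of _ "Poly_Mapping.keys p"]) (auto simp: in_keys_iff)
  then show ?thesis unfolding poly_dilate_def by simp
qed

lemma poly_dilate_add: "poly_dilate c e (p + q) = poly_dilate c e p + poly_dilate c e q"
  by (rule poly_mapping_eqI) (simp add: lookup_poly_dilate lookup_add algebra_simps)

lemma poly_dilate_zero: "poly_dilate c e 0 = 0"
  by (rule poly_mapping_eqI) (simp add: lookup_poly_dilate)

lemma poly_dilate_single:
  "poly_dilate c e (Poly_Mapping.single m a) = Poly_Mapping.single m (c ^ Poly_Mapping.lookup m e * a)"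
  by (rule poly_mapping_eqI) (simp add: lookup_poly_dilate lookup_single when_def)

lemma poly_dilate_one: "poly_dilate c e 1 = 1"
  by (rule poly_mapping_eqI) (simp add: lookup_poly_dilate lookup_one when_def)

lemma poly_dilate_eq_0: "c \<noteq> 0 \<Longrightarrow> poly_dilate c e p = 0 \<longleftrightarrow> p = 0"
  by (auto simp: poly_mapping_eq_iff fun_eq_iff lookup_poly_dilate)

text \<open>Multiplicativity: the exponent of e in a product monomial is the sum of the exponents.\<close>

lemma poly_dilate_mult:
  fixes f g :: "('e \<Rightarrow>\<^sub>0 nat) \<Rightarrow>\<^sub>0 'a::field"
  shows "poly_dilate c e (f * g) = poly_dilate c e f * poly_dilate c e g"
proof (rule poly_mapping_eqI)
  fix k
  let ?w = "\<lambda>m. c ^ Poly_Mapping.lookup m e"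
  have fin_f: "finite {l. Poly_Mapping.lookup f l * X l \<noteq> 0}" for X :: "_ \<Rightarrow> 'a"
    by (rule finite_subset[of _ "Poly_Mapping.keys f"]) (auto simp: in_keys_iff)
  have fin_g: "finite {q. (Y q * Poly_Mapping.lookup g q when k = l + q) \<noteq> 0}" for Y :: "_ \<Rightarrow> 'a" and l
    by (rule finite_subset[of _ "Poly_Mapping.keys g"]) (auto simp: in_keys_iff when_def)
  have split_weight: "?w k * (Poly_Mapping.lookup g q when k = l + q)
      = ?w l * (?w q * Poly_Mapping.lookup g q when k = l + q)" for l q
    by (auto simp: when_def lookup_add power_add)
  have inner: "?w k * (\<Sum>q. Poly_Mapping.lookup g q when k = l + q)
      = ?w l * (\<Sum>q. ?w q * Poly_Mapping.lookup g q when k = l + q)" for l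
    using Sum_any_right_distrib[OF fin_g[of "\<lambda>_. 1"], of "?w k"]
      Sum_any_right_distrib[OF fin_g[of ?w], of "?w l"]
    by (simp add: split_weight)
  have "Poly_Mapping.lookup (poly_dilate c e (f * g)) k
      = ?w k * (\<Sum>l. Poly_Mapping.lookup f l * (\<Sum>q. Poly_Mapping.lookup g q when k = l + q))"
    by (simp add: lookup_poly_dilate lookup_mult)
  also have "\<dots> = (\<Sum>l. Poly_Mapping.lookup f l * (?w k * (\<Sum>q. Poly_Mapping.lookup g q when k = l + q)))"
    by (subst Sum_any_right_distrib[OF fin_f]) (simp add: mult.left_commute)
  also have "\<dots> = (\<Sum>l. (?w l * Poly_Mapping.lookup f l) * (\<Sum>q. ?w q * Poly_Mapping.lookup g q when k = l + q))"
    by (simp add: inner mult_ac)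
  also have "\<dots> = Poly_Mapping.lookup (poly_dilate c e f * poly_dilate c e g) k"
    by (simp add: lookup_mult lookup_poly_dilate)
  finally show "Poly_Mapping.lookup (poly_dilate c e (f * g)) k
      = Poly_Mapping.lookup (poly_dilate c e f * poly_dilate c e g) k" .
qed

text \<open>The induced map on fractions; the degenerate case c = 0 is sent to 0 only to make the map total.\<close>

lift_definition rf_dilate :: "'a::field \<Rightarrow> 'e::linorder \<Rightarrow> ('a, 'e) ratfun \<Rightarrow> ('a, 'e) ratfun"
  is "\<lambda>c e x. if c = 0 then (0, 1) else (poly_dilate c e (fst x), poly_dilate c e (snd x))"
  by (auto simp: poly_dilate_eq_0 poly_dilate_mult[symmetric])

lemma rf_dilate_Fract: "c \<noteq> 0 \<Longrightarrow> rf_dilate c e (Fract a b) = Fract (poly_dilate c e a) (poly_dilate c e b)"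
  by transfer (auto simp: poly_dilate_eq_0 poly_dilate_zero)

lemma rf_dilate_add: "c \<noteq> 0 \<Longrightarrow> rf_dilate c e (x + y) = rf_dilate c e x + rf_dilate c e y"
  by (cases x, cases y) (simp add: rf_dilate_Fract poly_dilate_add poly_dilate_mult poly_dilate_eq_0)

lemma rf_dilate_mult: "c \<noteq> 0 \<Longrightarrow> rf_dilate c e (x * y) = rf_dilate c e x * rf_dilate c e y"
  by (cases x, cases y) (simp add: rf_dilate_Fract poly_dilate_mult poly_dilate_eq_0)

lemma rf_dilate_zero: "c \<noteq> 0 \<Longrightarrow> rf_dilate c e 0 = 0"
  by (simp add: Zero_fract_def rf_dilate_Fract poly_dilate_zero poly_dilate_one)

lemma rf_dilate_diff: "c \<noteq> 0 \<Longrightarrow> rf_dilate c e (x - y) = rf_dilate c e x - rf_dilate c e y"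
  by (metis add_diff_cancel rf_dilate_add diff_add_cancel)

lemma rf_dilate_sum: "c \<noteq> 0 \<Longrightarrow> rf_dilate c e (sum f A) = (\<Sum>x\<in>A. rf_dilate c e (f x))"
  by (induction A rule: infinite_finite_induct) (simp_all add: rf_dilate_zero rf_dilate_add)

lemma rf_dilate_const: "c \<noteq> 0 \<Longrightarrow> rf_dilate c e (rf_const x) = rf_const x"
  by (simp add: rf_const_def rf_dilate_Fract poly_dilate_single poly_dilate_one)

lemma rf_dilate_psi_other: "c \<noteq> 0 \<Longrightarrow> f \<noteq> e \<Longrightarrow> rf_dilate c e (psi f) = psi f"
  by (simp add: psi_def rf_dilate_Fract poly_dilate_single poly_dilate_one lookup_single)

lemma rf_dilate_psi_self: "c \<noteq> 0 \<Longrightarrow> rf_dilate c e (psi e) = rf_const c * psi e"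
  by (simp add: psi_def rf_const_def rf_dilate_Fract poly_dilate_single poly_dilate_one
      lookup_single mult_single)

lemma rf_dilate_span:
  fixes \<gamma> :: "'f \<Rightarrow> ('i \<Rightarrow> ('a::field, 'e::linorder) ratfun)"
  assumes "c \<noteq> 0" "finite D" "y \<in> fs.span (\<gamma> ` D)"
    and fixed: "\<And>f p. f \<in> D \<Longrightarrow> rf_dilate c e (\<gamma> f p) = \<gamma> f p"
  shows "(\<lambda>p. rf_dilate c e (y p)) \<in> fs.span (\<gamma> ` D)"
proof -
  obtain a where a: "y = (\<Sum>f\<in>D. fscale (a f) (\<gamma> f))"
    using span_image_sum[OF assms(2,3)] by blast
  have "(\<lambda>p. rf_dilate c e (y p)) = (\<Sum>f\<in>D. fscale (rf_dilate c e (a f)) (\<gamma> f))"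
    using fixed
    by (simp add: a fun_eq_iff sum_fun_apply fscale_def rf_dilate_sum[OF assms(1)]
        rf_dilate_mult[OF assms(1)])
  also have "\<dots> \<in> fs.span (\<gamma> ` D)"
    by (intro fs.span_sum fs.span_scale fs.span_base) auto
  finally show ?thesis .
qed

section \<open>Twisted families and their rank\<close>

definition twisted :: "('e \<Rightarrow> 'i \<Rightarrow> 'a) \<Rightarrow> ('e \<Rightarrow> 'i \<Rightarrow> 'a) \<Rightarrow> 'e::linorder \<Rightarrow> ('i \<Rightarrow> ('a::field, 'e) ratfun)" where
  "twisted \<alpha> \<beta> e = to_rf (\<alpha> e) - fscale (psi e) (to_rf (\<beta> e))"

text \<open>Dilating \<open>\<psi>(e)\<close> by a scalar \<open>c \<notin> {0,1}\<close> (which exists since the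
  field is infinite) fixes the other twisted vectors, so the difference of the twisted vector
  and its dilate, a non-zero multiple of \<open>\<beta>(e)\<close>, lies in the span.\<close>

lemma twisted_dependent_parts:
  fixes \<alpha> \<beta> :: "'e::linorder \<Rightarrow> ('i \<Rightarrow> 'a::field)"
  assumes inf: "infinite (UNIV :: 'a set)"
    and "e \<notin> D" "finite D" "twisted \<alpha> \<beta> e \<in> fs.span (twisted \<alpha> \<beta> ` D)"
  shows "to_rf (\<alpha> e) \<in> fs.span (twisted \<alpha> \<beta> ` D) \<and> to_rf (\<beta> e) \<in> fs.span (twisted \<alpha> \<beta> ` D)"
proof -
  let ?V = "fs.span (twisted \<alpha> \<beta> ` D)"
  obtain c :: 'a where c: "c \<notin> {0, 1}"
    using ex_new_if_finite[OF inf, of "{0, 1}"] by auto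
  then have c0: "c \<noteq> 0" by auto
  have "(\<lambda>p. rf_dilate c e (twisted \<alpha> \<beta> e p)) \<in> ?V"
  proof (rule rf_dilate_span[OF c0 assms(3,4)])
    fix f p assume "f \<in> D"
    then have "f \<noteq> e" using assms(2) by auto
    then show "rf_dilate c e (twisted \<alpha> \<beta> f p) = twisted \<alpha> \<beta> f p"
      by (simp add: twisted_def to_rf_def fscale_def rf_dilate_diff[OF c0] rf_dilate_mult[OF c0]
          rf_dilate_const[OF c0] rf_dilate_psi_other[OF c0])
  qed
  then have "twisted \<alpha> \<beta> e - (\<lambda>p. rf_dilate c e (twisted \<alpha> \<beta> e p)) \<in> ?V"
    using assms(4) by (rule fs.span_diff[rotated])
  moreover have "twisted \<alpha> \<beta> e - (\<lambda>p. rf_dilate c e (twisted \<alpha> \<beta> e p))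
      = fscale ((rf_const c - 1) * psi e) (to_rf (\<beta> e))"
    by (simp add: fun_eq_iff twisted_def to_rf_def fscale_def rf_dilate_diff[OF c0]
        rf_dilate_mult[OF c0] rf_dilate_const[OF c0] rf_dilate_psi_self[OF c0] algebra_simps)
  moreover have "(rf_const c - 1) * psi e \<noteq> (0 :: ('a, 'e) ratfun)"
    using c rf_const_inj[of c 1, where 'e='e] psi_nonzero[of e] by (auto simp: rf_const_1)
  ultimately have \<beta>: "to_rf (\<beta> e) \<in> ?V"
    using subspace_scale_iff[OF fs.subspace_span] by metis
  have "to_rf (\<alpha> e) = twisted \<alpha> \<beta> e + fscale (psi e) (to_rf (\<beta> e))"
    by (simp add: twisted_def)
  also have "\<dots> \<in> ?V" by (intro fs.span_add fs.span_scale assms(4) \<beta>)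
  finally show ?thesis using \<beta> by simp
qed

text \<open>Upper bound: for any finite-dimensional subspace U, the twisted vectors of indices
  whose two parts lie in U span at most \<open>dim U\<close> dimensions, and every other index adds at most one.\<close>

lemma twisted_rank_le:
  fixes \<alpha> \<beta> :: "'e::linorder \<Rightarrow> ('i \<Rightarrow> 'a::field)"
  assumes "finite E" "U \<subseteq> fs.span F" "finite F"
  shows "fs.dim (twisted \<alpha> \<beta> ` E) \<le> fs.dim U + card (E - {e\<in>E. \<alpha> e \<in> U \<and> \<beta> e \<in> U})"
proof -
  define D where "D = {e\<in>E. \<alpha> e \<in> U \<and> \<beta> e \<in> U}"
  have finD: "finite D" using assms(1) by (simp add: D_def)
  have "twisted \<alpha> \<beta> ` E = twisted \<alpha> \<beta> ` D \<union> twisted \<alpha> \<beta> ` (E - D)" by (auto simp: D_def)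
  then have "fs.dim (twisted \<alpha> \<beta> ` E) \<le> fs.dim (twisted \<alpha> \<beta> ` D) + card (twisted \<alpha> \<beta> ` (E - D))"
    using dim_union_le finD assms(1) by (metis finite_Diff finite_imageI)
  also have "card (twisted \<alpha> \<beta> ` (E - D)) \<le> card (E - D)"
    by (rule card_image_le) (simp add: assms(1))
  finally have split: "fs.dim (twisted \<alpha> \<beta> ` E) \<le> fs.dim (twisted \<alpha> \<beta> ` D) + card (E - D)"
    by simp
  obtain BU where BU: "BU \<subseteq> U" "fs.independent BU" "U \<subseteq> fs.span BU" "card BU = fs.dim U"
    by (rule fs.basis_exists)
  have finBU: "finite BU"
    using fs.independent_span_bound[OF assms(3) BU(2)] BU(1) assms(2) by blast
  have "twisted \<alpha> \<beta> ` D \<subseteq> fs.span (to_rf ` BU :: ('i \<Rightarrow> ('a, 'e) ratfun) set)"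
  proof
    fix z assume "z \<in> twisted \<alpha> \<beta> ` D"
    then obtain e where e: "e \<in> D" "z = twisted \<alpha> \<beta> e" by blast
    have "\<alpha> e \<in> fs.span BU" "\<beta> e \<in> fs.span BU" using e(1) BU(3) by (auto simp: D_def)
    then have "to_rf (\<alpha> e) \<in> fs.span (to_rf ` BU :: ('i \<Rightarrow> ('a, 'e) ratfun) set)"
      "to_rf (\<beta> e) \<in> fs.span (to_rf ` BU :: ('i \<Rightarrow> ('a, 'e) ratfun) set)"
      by (auto intro: to_rf_span)
    then show "z \<in> fs.span (to_rf ` BU :: ('i \<Rightarrow> ('a, 'e) ratfun) set)"
      by (simp add: e(2) twisted_def fs.span_diff fs.span_scale)
  qed
  then have "fs.dim (twisted \<alpha> \<beta> ` D) \<le> card (to_rf ` BU :: ('i \<Rightarrow> ('a, 'e) ratfun) set)"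
    using finBU by (intro fs.dim_le_card) auto
  also have "\<dots> \<le> card BU" using finBU by (rule card_image_le)
  finally show ?thesis using split BU(4) by (simp add: D_def)
qed

text \<open>If every twisted vector of a finite family depends on the others, then by the key step
  all \<open>\<alpha>\<close>'s and \<open>\<beta>\<close>'s embed into the span of the family, and extension of scalars bounds
  their dimension by the rank of the family.\<close>

lemma twisted_all_dependent:
  fixes \<alpha> \<beta> :: "'e::linorder \<Rightarrow> ('i \<Rightarrow> 'a::field)"
  assumes inf: "infinite (UNIV :: 'a set)" and "finite E"
    and dep: "\<And>e. e \<in> E \<Longrightarrow> twisted \<alpha> \<beta> e \<in> fs.span (twisted \<alpha> \<beta> ` (E - {e}))"
  shows "fs.dim (\<alpha> ` E \<union> \<beta> ` E) \<le> fs.dim (twisted \<alpha> \<beta> ` E)"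
proof -
  have "(to_rf ` (\<alpha> ` E \<union> \<beta> ` E) :: ('i \<Rightarrow> ('a, 'e) ratfun) set) \<subseteq> fs.span (twisted \<alpha> \<beta> ` E)"
  proof
    fix z :: "'i \<Rightarrow> ('a, 'e) ratfun" assume "z \<in> to_rf ` (\<alpha> ` E \<union> \<beta> ` E)"
    then obtain e where e: "e \<in> E" "z = to_rf (\<alpha> e) \<or> z = to_rf (\<beta> e)" by blast
    have "to_rf (\<alpha> e) \<in> fs.span (twisted \<alpha> \<beta> ` (E - {e}))
        \<and> to_rf (\<beta> e) \<in> fs.span (twisted \<alpha> \<beta> ` (E - {e}))"
      using twisted_dependent_parts[OF inf, of e "E - {e}"] dep[OF e(1)] assms(2) by simp
    moreover have "fs.span (twisted \<alpha> \<beta> ` (E - {e})) \<subseteq> fs.span (twisted \<alpha> \<beta> ` E)"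
      by (rule fs.span_mono) blast
    ultimately show "z \<in> fs.span (twisted \<alpha> \<beta> ` E)" using e(2) by blast
  qed
  then show ?thesis using assms(2) by (intro dim_le_extension) auto
qed

text \<open>The bound is attained: peel off indices whose twisted vector is independent of the
  others (each lowers the rank by one) until every remaining twisted vector depends on the
  others, and take X to be the remaining set.\<close>

lemma twisted_rank_attained:
  fixes \<alpha> \<beta> :: "'e::linorder \<Rightarrow> ('i \<Rightarrow> 'a::field)"
  assumes inf: "infinite (UNIV :: 'a set)" and "finite E"
  shows "\<exists>X\<subseteq>E. fs.dim (\<alpha> ` X \<union> \<beta> ` X) + card (E - X) \<le> fs.dim (twisted \<alpha> \<beta> ` E)"
  using assms(2)
proof (induction "card E" arbitrary: E rule: less_induct)
  case less
  let ?\<gamma> = "twisted \<alpha> \<beta>"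
  show ?case
  proof (cases "\<exists>e\<in>E. ?\<gamma> e \<notin> fs.span (?\<gamma> ` (E - {e}))")
    case True
    then obtain e where e: "e \<in> E" "?\<gamma> e \<notin> fs.span (?\<gamma> ` (E - {e}))" by blast
    have fin': "finite (E - {e})" using less.prems by simp
    have "card (E - {e}) < card E" using e(1) less.prems by (meson card_Diff1_less)
    then obtain X where X: "X \<subseteq> E - {e}"
      "fs.dim (\<alpha> ` X \<union> \<beta> ` X) + card (E - {e} - X) \<le> fs.dim (?\<gamma> ` (E - {e}))"
      using less.hyps[OF _ fin'] by blast
    have "?\<gamma> ` E = insert (?\<gamma> e) (?\<gamma> ` (E - {e}))" using e(1) by blast
    then have "fs.dim (?\<gamma> ` E) = Suc (fs.dim (?\<gamma> ` (E - {e})))"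
      using dim_insert_fin[OF fs.span_superset, of "?\<gamma> ` (E - {e})" "?\<gamma> e"] fin' e(2) by simp
    moreover have "E - X = insert e (E - {e} - X)" using X(1) e(1) by blast
    then have "card (E - X) = Suc (card (E - {e} - X))" using fin' by simp
    ultimately show ?thesis using X by (intro exI[of _ X]) auto
  next
    case False
    then have "fs.dim (\<alpha> ` E \<union> \<beta> ` E) \<le> fs.dim (?\<gamma> ` E)"
      using twisted_all_dependent[OF inf less.prems] by blast
    then show ?thesis by (intro exI[of _ E]) simp
  qed
qed

definition line_arcs :: "('v,'e) pre_digraph \<Rightarrow> ('k::field,'v,'e) sheaf \<Rightarrow> 'e set" where
  "line_arcs G S = {e\<in>arcs G. se_dim S e = 1}"

definition vertex_coords :: "('v,'e) pre_digraph \<Rightarrow> ('k::field,'v,'e) sheaf \<Rightarrow> ('v \<times> nat) set" where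
  "vertex_coords G S = Sigma (verts G) (\<lambda>v. {..<sv_dim S v})"

lemma finite_line_arcs: "finite (arcs G) \<Longrightarrow> finite (line_arcs G S)"
  by (simp add: line_arcs_def)

lemma FV_supported: "FV G S = supported (vertex_coords G S)"
  by (auto simp: FV_def supported_def vertex_coords_def)

lemma FE_line_arcs:
  assumes "\<forall>e\<in>arcs G. se_dim S e \<le> 1"
  shows "FE G S = {w. \<forall>e i. w (e, i) \<noteq> 0 \<longrightarrow> e \<in> line_arcs G S \<and> i = 0}"
  using assms by (force simp: FE_def line_arcs_def)

text \<open>The image in F(V) of the generator of the stalk at e under the restriction map M
  towards the endpoint \<open>endpt e\<close>: for M the head map this is \<open>\<alpha>(e) = F(h,e) 1\<close>, for the tail
  map \<open>\<beta>(e) = F(t,e) 1\<close>.\<close>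

definition arc_col :: "('v,'e) pre_digraph \<Rightarrow> ('k::field,'v,'e) sheaf \<Rightarrow> ('e \<Rightarrow> 'v)
    \<Rightarrow> ('e \<Rightarrow> nat \<Rightarrow> nat \<Rightarrow> 'k) \<Rightarrow> 'e \<Rightarrow> ('v \<times> nat \<Rightarrow> 'k)" where
  "arc_col G S endpt M e =
     (\<lambda>(v, j). if v = endpt e \<and> v \<in> verts G \<and> j < sv_dim S v then M e j 0 else 0)"

abbreviation head_col :: "('v,'e) pre_digraph \<Rightarrow> ('k::field,'v,'e) sheaf \<Rightarrow> 'e \<Rightarrow> ('v \<times> nat \<Rightarrow> 'k)" where
  "head_col G S \<equiv> arc_col G S (head G) (s_hmap S)"

abbreviation tail_col :: "('v,'e) pre_digraph \<Rightarrow> ('k::field,'v,'e) sheaf \<Rightarrow> 'e \<Rightarrow> ('v \<times> nat \<Rightarrow> 'k)" where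
  "tail_col G S \<equiv> arc_col G S (tail G) (s_tmap S)"

lemma sum_lessThan_le_one:
  fixes n :: nat
  assumes "n \<le> 1"
  shows "(\<Sum>i<n. g i) = (if n = 1 then g 0 else (0::'k::comm_monoid_add))"
  using assms by (cases n) auto

lemma boundary_decomp:
  fixes S :: "('k::field,'v,'e) sheaf"
  assumes fin: "finite (arcs G)" and le: "\<forall>e\<in>arcs G. se_dim S e \<le> 1"
  shows "(\<lambda>(v, j). if v \<in> verts G \<and> j < sv_dim S v then
            (\<Sum>e\<in>{e\<in>arcs G. endpt e = v}. \<Sum>i<se_dim S e. M e j i * w (e, i)) else 0)
       = (\<Sum>e\<in>line_arcs G S. fscale (w (e, 0)) (arc_col G S endpt M e))" (is "?L = ?R")
proof
  fix p :: "'v \<times> nat"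
  obtain v j where p: "p = (v, j)" by (cases p)
  show "?L p = ?R p"
  proof (cases "v \<in> verts G \<and> j < sv_dim S v")
    case True
    have "?L p = (\<Sum>e\<in>arcs G. if endpt e = v then (\<Sum>i<se_dim S e. M e j i * w (e, i)) else 0)"
      using True fin by (simp add: p sum.inter_filter)
    also have "\<dots> = (\<Sum>e\<in>arcs G. if se_dim S e = 1 \<and> endpt e = v then M e j 0 * w (e, 0) else 0)"
      using le by (intro sum.cong refl) (auto simp: sum_lessThan_le_one)
    also have "\<dots> = (\<Sum>e\<in>line_arcs G S. if endpt e = v then M e j 0 * w (e, 0) else 0)"
      using fin unfolding line_arcs_def by (subst sum.inter_filter) (auto intro!: sum.cong)
    also have "\<dots> = ?R p"
      using True by (simp add: sum_fun_apply fscale_def arc_col_def p) (intro sum.cong refl, auto)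
    finally show ?thesis .
  next
    case False
    then show ?thesis by (auto simp: p sum_fun_apply fscale_def arc_col_def)
  qed
qed

lemma d_h_decomp:
  assumes "finite (arcs G)" "\<forall>e\<in>arcs G. se_dim S e \<le> 1"
  shows "d_h G S w = (\<Sum>e\<in>line_arcs G S. fscale (w (e, 0)) (head_col G S e))"
  unfolding d_h_def by (rule boundary_decomp[OF assms])

lemma d_t_decomp:
  assumes "finite (arcs G)" "\<forall>e\<in>arcs G. se_dim S e \<le> 1"
  shows "d_t G S w = (\<Sum>e\<in>line_arcs G S. fscale (w (e, 0)) (tail_col G S e))"
  unfolding d_t_def by (rule boundary_decomp[OF assms])

lemma twist_dims [simp]: "sv_dim (twist S) = sv_dim S" "se_dim (twist S) = se_dim S"
  by (simp_all add: twist_def)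

lemma line_arcs_twist [simp]: "line_arcs G (twist S) = line_arcs G S"
  by (simp add: line_arcs_def)

lemma head_col_twist: "head_col G (twist S) e = to_rf (head_col G S e)"
  by (auto simp: arc_col_def twist_def to_rf_def fun_eq_iff rf_const_0)

lemma tail_col_twist: "tail_col G (twist S) e = fscale (psi e) (to_rf (tail_col G S e))"
  by (auto simp: arc_col_def twist_def to_rf_def fun_eq_iff rf_const_0 fscale_def)

text \<open>The twisted coboundary sends the generator of a line arc e to the twisted vector
  \<open>\<alpha>(e) - \<psi>(e) \<beta>(e)\<close>, so \<open>H\<^sub>1\<close> of the twisted sheaf is the space of relations of this family.\<close>

lemma H1_twist:
  fixes S :: "('a::field,'v,'e::linorder) sheaf"
  assumes fin: "finite (arcs G)" and le: "\<forall>e\<in>arcs G. se_dim S e \<le> 1"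
  shows "H1 G (twist S) = relations (twisted (head_col G S) (tail_col G S)) (line_arcs G S)"
proof -
  have le': "\<forall>e\<in>arcs G. se_dim (twist S) e \<le> 1" using le by simp
  have coboundary: "d_map G (twist S) w
      = (\<Sum>e\<in>line_arcs G S. fscale (w (e, 0)) (twisted (head_col G S) (tail_col G S) e))" for w
  proof -
    have "d_map G (twist S) w = d_h G (twist S) w - d_t G (twist S) w"
      by (simp add: d_map_def fun_eq_iff)
    also have "\<dots> = (\<Sum>e\<in>line_arcs G S. fscale (w (e, 0)) (to_rf (head_col G S e)))
        - (\<Sum>e\<in>line_arcs G S. fscale (w (e, 0)) (fscale (psi e) (to_rf (tail_col G S e))))"
      by (simp only: d_h_decomp[OF fin le'] d_t_decomp[OF fin le'] line_arcs_twist
          head_col_twist tail_col_twist)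
    also have "\<dots> = (\<Sum>e\<in>line_arcs G S. fscale (w (e, 0)) (twisted (head_col G S) (tail_col G S) e))"
      by (simp add: twisted_def fs.scale_right_diff_distrib sum_subtractf)
    finally show ?thesis .
  qed
  show ?thesis
    unfolding H1_def FE_line_arcs[OF le'] relations_def
    by (auto simp: coboundary zero_fun_def[symmetric])
qed

lemma h1_twist_rank:
  fixes S :: "('a::field,'v,'e::linorder) sheaf"
  assumes "finite (arcs G)" "\<forall>e\<in>arcs G. se_dim S e \<le> 1"
  shows "int (h1_twist G S) = int (card (line_arcs G S))
           - int (fs.dim (twisted (head_col G S) (tail_col G S) ` line_arcs G S))"
proof -
  have "finite (line_arcs G S)" using assms(1) by (rule finite_line_arcs)
  then have rank_nullity: "fs.dim (relations (twisted (head_col G S) (tail_col G S)) (line_arcs G S))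
      + fs.dim (twisted (head_col G S) (tail_col G S) ` line_arcs G S) = card (line_arcs G S)"
    by (rule relations_rank_nullity)
  show ?thesis
    unfolding h1_twist_def vdim_def H1_twist[OF assms] rank_nullity[symmetric] by simp
qed

section \<open>The excess of a subspace\<close>

definition spanned_arcs :: "('v,'e) pre_digraph \<Rightarrow> ('k::field,'v,'e) sheaf \<Rightarrow> ('v \<times> nat \<Rightarrow> 'k) set \<Rightarrow> 'e set" where
  "spanned_arcs G S U = {e\<in>line_arcs G S. head_col G S e \<in> U \<and> tail_col G S e \<in> U}"

lemma sum_fscale_delta:
  assumes "finite A"
  shows "(\<Sum>f\<in>A. fscale (if f = e then c else 0) (x f)) = (if e \<in> A then fscale c (x e) else 0)"
  using assms by (simp add: if_distrib[where f="\<lambda>c. fscale c _"] sum.delta cong: if_cong)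

lemma d_edge_comp:
  assumes "finite (arcs G)" "\<forall>e\<in>arcs G. se_dim S e \<le> 1"
  shows "d_h G S (edge_comp e w) = (if e \<in> line_arcs G S then fscale (w (e, 0)) (head_col G S e) else 0)"
    and "d_t G S (edge_comp e w) = (if e \<in> line_arcs G S then fscale (w (e, 0)) (tail_col G S e) else 0)"
proof -
  have "edge_comp e w (f, 0) = (if f = e then w (e, 0) else 0)" for f
    by (simp add: edge_comp_def)
  then show "d_h G S (edge_comp e w) = (if e \<in> line_arcs G S then fscale (w (e, 0)) (head_col G S e) else 0)"
    and "d_t G S (edge_comp e w) = (if e \<in> line_arcs G S then fscale (w (e, 0)) (tail_col G S e) else 0)"
    by (simp_all add: d_h_decomp[OF assms] d_t_decomp[OF assms] sum_fscale_delta finite_line_arcs[OF assms(1)])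
qed

lemma d_edge_comp_in_subspace:
  assumes fin: "finite (arcs G)" and le: "\<forall>e\<in>arcs G. se_dim S e \<le> 1" and U: "fs.subspace U"
  shows "d_h G S (edge_comp e w) \<in> U \<and> d_t G S (edge_comp e w) \<in> U \<longleftrightarrow>
      (e \<in> line_arcs G S \<longrightarrow> w (e, 0) = 0 \<or> (head_col G S e \<in> U \<and> tail_col G S e \<in> U))"
proof (cases "e \<in> line_arcs G S")
  case True
  then have "d_h G S (edge_comp e w) \<in> U \<longleftrightarrow> w (e, 0) = 0 \<or> head_col G S e \<in> U"
    "d_t G S (edge_comp e w) \<in> U \<longleftrightarrow> w (e, 0) = 0 \<or> tail_col G S e \<in> U"
    by (simp_all add: d_edge_comp[OF fin le] subspace_scale_iff[OF U])
  then show ?thesis using True by blast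
next
  case False
  then show ?thesis by (simp add: d_edge_comp[OF fin le] fs.subspace_0[OF U])
qed

lemma Gamma_ht_supported:
  fixes S :: "('k::field,'v,'e) sheaf"
  assumes fin: "finite (arcs G)" and le: "\<forall>e\<in>arcs G. se_dim S e \<le> 1" and U: "fs.subspace U"
  shows "Gamma_ht G S U = supported (spanned_arcs G S U \<times> {0})"
proof -
  note component = d_edge_comp_in_subspace[OF fin le U]
  show ?thesis
  proof (rule set_eqI, rule iffI)
    fix w assume w: "w \<in> Gamma_ht G S U"
    then have supp: "\<forall>e i. w (e, i) \<noteq> 0 \<longrightarrow> e \<in> line_arcs G S \<and> i = 0"
      and cond: "\<forall>e\<in>arcs G. d_h G S (edge_comp e w) \<in> U \<and> d_t G S (edge_comp e w) \<in> U"
      by (auto simp: Gamma_ht_def FE_line_arcs[OF le])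
    show "w \<in> supported (spanned_arcs G S U \<times> {0})"
      unfolding supported_def
    proof (intro CollectI allI impI)
      fix q assume nz: "w q \<noteq> 0"
      obtain e i where q: "q = (e, i)" by (cases q)
      then have e: "e \<in> line_arcs G S" "i = 0" using supp nz by auto
      have "e \<in> arcs G" using e(1) by (simp add: line_arcs_def)
      then have "d_h G S (edge_comp e w) \<in> U \<and> d_t G S (edge_comp e w) \<in> U" using cond by blast
      then have "head_col G S e \<in> U \<and> tail_col G S e \<in> U"
        using component[of e w] e nz q by simp
      then show "q \<in> spanned_arcs G S U \<times> {0}" using q e by (auto simp: spanned_arcs_def)
    qed
  next
    fix w :: "'e \<times> nat \<Rightarrow> 'k" assume "w \<in> supported (spanned_arcs G S U \<times> {0})"
    then have supp: "\<forall>e i. w (e, i) \<noteq> 0 \<longrightarrow> e \<in> spanned_arcs G S U \<and> i = 0"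
      by (auto simp: supported_def)
    then have "w \<in> FE G S" by (auto simp: FE_line_arcs[OF le] spanned_arcs_def)
    moreover have "d_h G S (edge_comp e w) \<in> U \<and> d_t G S (edge_comp e w) \<in> U" for e
      unfolding component using supp[rule_format, of e 0] by (auto simp: spanned_arcs_def)
    ultimately show "w \<in> Gamma_ht G S U" by (simp add: Gamma_ht_def)
  qed
qed

lemma excess_spanned_arcs:
  fixes S :: "('k::field,'v,'e) sheaf"
  assumes "finite (arcs G)" "\<forall>e\<in>arcs G. se_dim S e \<le> 1" "fs.subspace U"
  shows "excess G S U = int (card (spanned_arcs G S U)) - int (fs.dim U)"
proof -
  have "finite (spanned_arcs G S U \<times> {0::nat})"
    using assms(1) by (simp add: spanned_arcs_def line_arcs_def)
  then show ?thesis
    by (simp add: excess_def vdim_def Gamma_ht_supported[OF assms] dim_supported card_cartesian_product)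
qed

lemma excess_le_h1_twist:
  fixes S :: "('a::field,'v,'e::linorder) sheaf"
  assumes fin: "finite (arcs G)" "finite (verts G)" and le: "\<forall>e\<in>arcs G. se_dim S e \<le> 1"
    and U: "fs.subspace U" "U \<subseteq> FV G S"
  shows "excess G S U \<le> int (h1_twist G S)"
proof -
  let ?E = "line_arcs G S"
  have finE: "finite ?E" using fin(1) by (rule finite_line_arcs)
  have finP: "finite (vertex_coords G S)" using fin(2) by (simp add: vertex_coords_def)
  have "U \<subseteq> fs.span (unit_vec ` vertex_coords G S)"
    using U(2) supported_span[OF finP] by (auto simp: FV_supported)
  then have rank: "fs.dim (twisted (head_col G S) (tail_col G S) ` ?E)
      \<le> fs.dim U + card (?E - spanned_arcs G S U)"
    using twisted_rank_le[OF finE, where \<alpha> = "head_col G S" and \<beta> = "tail_col G S"] finP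
    by (simp add: spanned_arcs_def)
  have sub: "spanned_arcs G S U \<subseteq> ?E" by (auto simp: spanned_arcs_def)
  then have "card (?E - spanned_arcs G S U) = card ?E - card (spanned_arcs G S U)"
    "card (spanned_arcs G S U) \<le> card ?E"
    using card_Diff_subset[OF finite_subset[OF sub finE] sub] card_mono[OF finE sub] by simp_all
  then show ?thesis
    using rank excess_spanned_arcs[OF fin(1) le U(1)] h1_twist_rank[OF fin(1) le] by simp
qed

text \<open>Over an infinite field the bound is attained, by the span of the columns of the arc
  set provided by \<open>twisted_rank_attained\<close>.\<close>

lemma h1_twist_attained:
  fixes S :: "('a::field,'v,'e::linorder) sheaf"
  assumes inf: "infinite (UNIV :: 'a set)"
    and fin: "finite (arcs G)" and le: "\<forall>e\<in>arcs G. se_dim S e \<le> 1"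
  shows "\<exists>U. fs.subspace U \<and> U \<subseteq> FV G S \<and> int (h1_twist G S) \<le> excess G S U"
proof -
  let ?E = "line_arcs G S" and ?\<alpha> = "head_col G S" and ?\<beta> = "tail_col G S"
  have finE: "finite ?E" using fin by (rule finite_line_arcs)
  obtain X where X: "X \<subseteq> ?E" "fs.dim (?\<alpha> ` X \<union> ?\<beta> ` X) + card (?E - X) \<le> fs.dim (twisted ?\<alpha> ?\<beta> ` ?E)"
    using twisted_rank_attained[OF inf finE] by blast
  define U where "U = fs.span (?\<alpha> ` X \<union> ?\<beta> ` X)"
  have sub: "fs.subspace U" by (simp add: U_def)
  have "?\<alpha> e \<in> FV G S" "?\<beta> e \<in> FV G S" for e
    by (auto simp: FV_def arc_col_def)
  then have "?\<alpha> ` X \<union> ?\<beta> ` X \<subseteq> supported (vertex_coords G S)"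
    by (auto simp: FV_supported)
  then have "U \<subseteq> FV G S"
    unfolding U_def FV_supported by (rule fs.span_minimal[OF _ subspace_supported])
  have "X \<subseteq> spanned_arcs G S U" using X(1) by (auto simp: spanned_arcs_def U_def intro: fs.span_base)
  then have "card X \<le> card (spanned_arcs G S U)"
    using finE by (intro card_mono) (auto simp: spanned_arcs_def)
  moreover have "card (?E - X) = card ?E - card X" "card X \<le> card ?E"
    using card_Diff_subset[OF finite_subset[OF X(1) finE] X(1)] card_mono[OF finE X(1)] by simp_all
  ultimately have "int (h1_twist G S) \<le> excess G S U"
    using X(2) excess_spanned_arcs[OF fin le sub] h1_twist_rank[OF fin le] by (simp add: U_def)
  then show ?thesis using sub \<open>U \<subseteq> FV G S\<close> by blast
qed

text \<open>Excess is bounded below by minus the dimension of F(V), so the set of excesses is finite.\<close>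

lemma excess_lower_bound:
  fixes S :: "('a::field,'v,'e) sheaf"
  assumes fin: "finite (arcs G)" "finite (verts G)" and le: "\<forall>e\<in>arcs G. se_dim S e \<le> 1"
    and U: "fs.subspace U" "U \<subseteq> FV G S"
  shows "- int (card (vertex_coords G S)) \<le> excess G S U"
proof -
  have finP: "finite (vertex_coords G S)" using fin(2) by (simp add: vertex_coords_def)
  have "U \<subseteq> fs.span (unit_vec ` vertex_coords G S)"
    using U(2) supported_span[OF finP] by (auto simp: FV_supported)
  then have "fs.dim U \<le> card (unit_vec ` vertex_coords G S :: ('v \<times> nat \<Rightarrow> 'a) set)"
    using finP by (intro fs.dim_le_card) auto
  also have "\<dots> \<le> card (vertex_coords G S)" using finP by (rule card_image_le)
  finally show ?thesis using excess_spanned_arcs[OF fin(1) le U(1)] by simp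
qed

theorem theorem1:
  fixes G :: "('v, 'e::linorder) pre_digraph"
    and S :: "('a::field, 'v, 'e) sheaf"
  assumes "infinite (UNIV :: 'a set)"
    and "fin_digraph G"
    and "\<forall>e \<in> arcs G. se_dim S e \<le> 1"
  shows "int (h1_twist G S) = max_excess G S"
proof -
  have fin: "finite (arcs G)" "finite (verts G)"
    using assms(2) by (simp_all add: fin_digraph.finite_arcs fin_digraph.finite_verts)
  let ?M = "{excess G S U | U. is_subspace U \<and> U \<subseteq> FV G S}"
  have upper: "m \<le> int (h1_twist G S)" and lower: "- int (card (vertex_coords G S)) \<le> m"
    if "m \<in> ?M" for m
  proof -
    obtain U where "m = excess G S U" "fs.subspace U" "U \<subseteq> FV G S"
      using \<open>m \<in> ?M\<close> by (auto simp: is_subspace_def)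
    then show "m \<le> int (h1_twist G S)" "- int (card (vertex_coords G S)) \<le> m"
      using excess_le_h1_twist[OF fin assms(3)] excess_lower_bound[OF fin assms(3)] by simp_all
  qed
  obtain U where U: "fs.subspace U" "U \<subseteq> FV G S" "int (h1_twist G S) \<le> excess G S U"
    using h1_twist_attained[OF assms(1) fin(1) assms(3)] by blast
  then have "excess G S U \<in> ?M" unfolding is_subspace_def by blast
  moreover from this have "excess G S U \<le> int (h1_twist G S)" by (rule upper)
  ultimately have attained: "int (h1_twist G S) \<in> ?M" using U(3) by simp
  have "?M \<subseteq> {- int (card (vertex_coords G S))..int (h1_twist G S)}"
    using upper lower by (meson atLeastAtMost_iff subsetI)
  then have "finite ?M" by (rule finite_subset) simp
  then have "Max ?M = int (h1_twist G S)" using upper attained by (rule Max_eqI)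
  then show ?thesis by (simp add: max_excess_def)
qed

end
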